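(* Let $G=(V,E)$ be a simple connected graph with $N\ge 2$ nodes. For the Mellin transform with parameter $s>0$ let $w_{ij}=d_{ij}^{-s}$ for all pairs $i\neq j$, and for the Laplace transform with parameter $\lambda>0$ let $w_{ij}=e^{-\lambda d_{ij}}$ if $d_{ij}>1$ and $w_{ij}=1$ if $(i,j)\in E$. Let $\tilde{L}_\tau(G,w)$ be the corresponding transformed $d$-path Laplacian, i.e. the weighted Laplacian with off-diagonal entries $-w_{ij}$ and diagonal entries $\sum_{j\neq i}w_{ij}$ (equivalently $\sum_{d=1}^{d_{max}}d^{-s}L_d$ in the Mellin case and $L+\sum_{d=2}^{d_{max}}e^{-\lambda d}L_d$ in the Laplace case), and let $\lambda_2(G,w)$ and $\lambda_N(G,w)$ be its second smallest and largest eigenvalues. If $s'<s$ (Mellin case) or $\lambda'<\lambda$ (Laplace case), and $w'$ denotes the weights with parameter $s'$ (resp. $\lambda'$), then $\lambda_2(G,w')\ge\lambda_2(G,w)$ and $\lambda_N(G,w')\ge\lambda_N(G,w)$. That is, $\lambda_2(G,w)$ and $\lambda_N(G,w)$ are non-increasing in $s$ (resp. $\lambda$).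
   Context: $d_{ij}$ is the shortest-path distance between nodes $i,j$ in $G$ and $d_{max}$ the diameter. $L$ is the usual graph Laplacian. For $1\le d\le d_{max}$, $L_d$ is the $N\times N$ matrix with $(L_d)_{ij}=-1$ if $i\ne j$ and $d_{ij}=d$, $0$ for other off-diagonal entries, and $(L_d)_{ii}$ equal to the number of nodes at distance $d$ from $i$. Eigenvalues are ordered $0=\lambda_1\le\lambda_2\le\cdots\le\lambda_N$. *)

theory Defs
  imports "Jordan_Normal_Form.Char_Poly" "HOL-Library.Multiset"
begin

definition is_walk :: "(nat \<Rightarrow> nat \<Rightarrow> bool) \<Rightarrow> nat \<Rightarrow> nat list \<Rightarrow> bool" where
  "is_walk E N xs \<longleftrightarrow> xs \<noteq> [] \<and> set xs \<subseteq> {..<N} \<and>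
     (\<forall>k. k + 1 < length xs \<longrightarrow> E (xs ! k) (xs ! (k + 1)))"

definition simple_graph :: "(nat \<Rightarrow> nat \<Rightarrow> bool) \<Rightarrow> nat \<Rightarrow> bool" where
  "simple_graph E N \<longleftrightarrow> (\<forall>i j. E i j \<longrightarrow> i < N \<and> j < N) \<and>
     (\<forall>i j. E i j \<longrightarrow> E j i) \<and> (\<forall>i. \<not> E i i)"

definition graph_connected :: "(nat \<Rightarrow> nat \<Rightarrow> bool) \<Rightarrow> nat \<Rightarrow> bool" where
  "graph_connected E N \<longleftrightarrow> (\<forall>i<N. \<forall>j<N. \<exists>xs. is_walk E N xs \<and> hd xs = i \<and> last xs = j)"

definition gdist :: "(nat \<Rightarrow> nat \<Rightarrow> bool) \<Rightarrow> nat \<Rightarrow> nat \<Rightarrow> nat \<Rightarrow> nat" where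
  "gdist E N i j = (LEAST k. \<exists>xs. is_walk E N xs \<and> hd xs = i \<and> last xs = j \<and> length xs = k + 1)"

definition wlaplacian :: "nat \<Rightarrow> (nat \<Rightarrow> nat \<Rightarrow> real) \<Rightarrow> real mat" where
  "wlaplacian N w = mat N N (\<lambda>(i, j). if i = j then (\<Sum>k\<in>{..<N} - {i}. w i k) else - w i j)"

definition mellin_weight :: "(nat \<Rightarrow> nat \<Rightarrow> bool) \<Rightarrow> nat \<Rightarrow> real \<Rightarrow> nat \<Rightarrow> nat \<Rightarrow> real" where
  "mellin_weight E N s i j = real (gdist E N i j) powr (- s)"

definition laplace_weight :: "(nat \<Rightarrow> nat \<Rightarrow> bool) \<Rightarrow> nat \<Rightarrow> real \<Rightarrow> nat \<Rightarrow> nat \<Rightarrow> real" where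
  "laplace_weight E N l i j = (if E i j then 1 else exp (- l * real (gdist E N i j)))"

definition sorted_eigenvalues :: "real mat \<Rightarrow> real list" where
  "sorted_eigenvalues A = sorted_list_of_multiset (proots (char_poly A))"

text \<open>k-th smallest eigenvalue, 1-based: lambda_1 <= ... <= lambda_N.\<close>
definition eigval :: "real mat \<Rightarrow> nat \<Rightarrow> real" where
  "eigval A k = sorted_eigenvalues A ! (k - 1)"

end

theory Submission
  imports Defs "Jordan_Normal_Form.Schur_Decomposition"
begin

text \<open>Raising \<open>s\<close> (resp. \<open>\<lambda>\<close>) lowers every off-diagonal weight, and the quadratic form of a
  weighted Laplacian, \<open>x\<^sup>T L x = \<Sum>\<^sub>i\<^sub>,\<^sub>j w\<^sub>i\<^sub>j (x\<^sub>i - x\<^sub>j)\<^sup>2 / 2\<close>, is monotone in the weights.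
  So the Laplacian only decreases in the Loewner order, and by Courant--Fischer so do all its
  eigenvalues. Concretely, diagonalising both matrices orthogonally, the largest eigenvalue is the
  maximum of the Rayleigh quotient, and the second one is squeezed by a unit vector orthogonal to a
  bottom eigenvector of the smaller matrix inside the span of the two bottom eigenvectors of the
  larger one.\<close>

section \<open>Spectral theorem for real symmetric matrices\<close>

lemma orthogonal_mat_right_inverse:
  fixes U :: "'a :: field mat"
  assumes "U \<in> carrier_mat n n" and "transpose_mat U * U = 1\<^sub>m n"
  shows "U * transpose_mat U = 1\<^sub>m n"
  using mat_mult_left_right_inverse[of "transpose_mat U" n U] assms by simp

lemma symmetric_mat_entry:
  assumes "A \<in> carrier_mat n n" and "transpose_mat A = A" and "i < n" and "j < n"
  shows "A $$ (j, i) = A $$ (i, j)"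
  using assms by (metis carrier_matD index_transpose_mat(1))

lemma symmetric_mat_congruence:
  fixes A :: "'a :: comm_semiring_1 mat"
  assumes W: "W \<in> carrier_mat n n" and A: "A \<in> carrier_mat n n" and sym: "transpose_mat A = A"
  shows "transpose_mat (transpose_mat W * A * W) = transpose_mat W * A * W"
proof -
  have WA: "transpose_mat W * A \<in> carrier_mat n n" using W A by simp
  have "transpose_mat (transpose_mat W * A * W) = transpose_mat W * transpose_mat (transpose_mat W * A)"
    by (rule transpose_mult[OF WA W])
  also have "transpose_mat (transpose_mat W * A) = A * W"
    using transpose_mult[of "transpose_mat W" n n A n] W A sym by simp
  finally show ?thesis using W A by (simp add: assoc_mult_mat[of _ n n _ n _ n])
qed

lemma congruence_entry:
  fixes A :: "'a :: comm_semiring_1 mat"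
  assumes W: "W \<in> carrier_mat n n" and A: "A \<in> carrier_mat n n" and i: "i < n" and j: "j < n"
  shows "(transpose_mat W * A * W) $$ (i, j) = col W i \<bullet> (A *\<^sub>v col W j)"
proof -
  have "transpose_mat W * A * W = transpose_mat W * (A * W)"
    using W A by (metis assoc_mult_mat transpose_carrier_mat)
  then show ?thesis
    using W A i j by (simp add: col_mult2[OF A W j])
qed

text \<open>A root of the complex characteristic polynomial is real because the Hermitian form
  \<open>w\<^sup>* A w\<close> is real and equals the root times the positive number \<open>w\<^sup>* w\<close>.\<close>

lemma hermitian_form_real:
  fixes A :: "real mat" and w :: "complex vec"
  assumes A: "A \<in> carrier_mat n n" and sym: "transpose_mat A = A"
  defines "s \<equiv> (\<Sum>i<n. \<Sum>j<n. cnj (w $ i) * of_real (A $$ (i, j)) * w $ j)"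
  shows "cnj s = s"
proof -
  have "cnj s = (\<Sum>i<n. \<Sum>j<n. w $ i * of_real (A $$ (i, j)) * cnj (w $ j))"
    unfolding s_def by simp
  also have "\<dots> = (\<Sum>j<n. \<Sum>i<n. w $ i * of_real (A $$ (i, j)) * cnj (w $ j))"
    by (rule sum.swap)
  also have "\<dots> = s"
    unfolding s_def using symmetric_mat_entry[OF A sym]
    by (intro sum.cong refl) (simp add: mult_ac)
  finally show ?thesis .
qed

lemma symmetric_mat_real_eigenvalue:
  fixes A :: "real mat"
  assumes A: "A \<in> carrier_mat n n" and sym: "transpose_mat A = A" and n: "n > 0"
  shows "\<exists>e. eigenvalue A e"
proof -
  let ?C = "map_mat complex_of_real A"
  have C: "?C \<in> carrier_mat n n" using A by auto
  have "degree (char_poly ?C) = n" using degree_monic_char_poly[OF C] by auto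
  then obtain z where z: "poly (char_poly ?C) z = 0"
    using fundamental_theorem_of_algebra constant_degree n by (metis neq0_conv)
  then obtain w where "eigenvector ?C w z"
    using eigenvalue_root_char_poly[OF C] unfolding eigenvalue_def by auto
  hence w: "w \<in> carrier_vec n" "w \<noteq> 0\<^sub>v n" "?C *\<^sub>v w = z \<cdot>\<^sub>v w"
    unfolding eigenvector_def using C by auto
  define s where "s = (\<Sum>i<n. \<Sum>j<n. cnj (w $ i) * of_real (A $$ (i, j)) * w $ j)"
  define r where "r = (\<Sum>i<n. (cmod (w $ i))\<^sup>2)"
  have "s = (\<Sum>i<n. cnj (w $ i) * (?C *\<^sub>v w) $ i)"
    unfolding s_def using A w(1)
    by (auto simp: scalar_prod_def sum_distrib_left mult_ac intro!: sum.cong)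
  also have "\<dots> = z * of_real r"
    unfolding w(3) r_def of_real_sum sum_distrib_left using w(1)
    by (intro sum.cong refl) (simp add: mult.commute mult.left_commute flip: complex_norm_square)
  finally have s: "s = z * of_real r" .
  obtain i where "i < n" "w $ i \<noteq> 0" using w(1,2) by force
  hence "r > 0" unfolding r_def by (intro sum_pos2[of _ i]) auto
  moreover have "cnj s = s" unfolding s_def by (rule hermitian_form_real[OF A sym])
  ultimately have "cnj z = z" using s by (simp add: complex_cnj_mult)
  hence zr: "z = of_real (Re z)" by (metis Reals_cnj_iff complex_is_Real_iff of_real_Re)
  have "char_poly ?C = map_poly of_real (char_poly A)" by (rule of_real_hom.char_poly_hom[OF A])
  hence "poly (char_poly A) (Re z) = 0"
    using z zr by (metis of_real_hom.poly_map_poly of_real_eq_0_iff)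
  thus ?thesis using eigenvalue_root_char_poly[OF A] by blast
qed

lemma symmetric_mat_unit_eigenvector:
  fixes A :: "real mat"
  assumes A: "A \<in> carrier_mat n n" and sym: "transpose_mat A = A" and n: "n > 0"
  obtains e v where "v \<in> carrier_vec n" "v \<bullet> v = 1" "A *\<^sub>v v = e \<cdot>\<^sub>v v"
proof -
  obtain e where ev: "eigenvalue A e" using symmetric_mat_real_eigenvalue[OF A sym n] by auto
  define u where "u = find_eigenvector A e"
  have u: "u \<in> carrier_vec n" "u \<noteq> 0\<^sub>v n" "A *\<^sub>v u = e \<cdot>\<^sub>v u"
    using find_eigenvector[OF A ev, folded u_def] A unfolding eigenvector_def by auto
  have "u \<bullet> u > 0"
  proof -
    obtain i where i: "i < n" "u $ i \<noteq> 0" using u(1,2) by force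
    have "u \<bullet> u = (\<Sum>k<n. (u $ k)\<^sup>2)"
      using u(1) by (simp add: scalar_prod_def power2_eq_square lessThan_atLeast0)
    also have "\<dots> > 0" by (rule sum_pos2[of _ i]) (use i in auto)
    finally show ?thesis .
  qed
  define v where "v = (1 / sqrt (u \<bullet> u)) \<cdot>\<^sub>v u"
  have "v \<in> carrier_vec n" unfolding v_def using u by simp
  moreover have "v \<bullet> v = 1" unfolding v_def using u(1) \<open>u \<bullet> u > 0\<close> by (simp add: field_simps)
  moreover have "A *\<^sub>v v = e \<cdot>\<^sub>v v" unfolding v_def using u A
    by (simp add: mult_mat_vec smult_smult_assoc mult.commute)
  ultimately show ?thesis by (rule that)
qed

lemma unit_vec_orthonormal_completion:
  fixes v :: "real vec"
  assumes v: "v \<in> carrier_vec n" and v1: "v \<bullet> v = 1"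
  obtains W where "W \<in> carrier_mat n n" "transpose_mat W * W = 1\<^sub>m n" "col W 0 = v"
proof -
  interpret cof_vec_space n "TYPE(real)" .
  have v0: "v \<noteq> 0\<^sub>v n" using v1 by auto
  define b where "b = basis_completion v"
  note bc = basis_completion[OF v v0, folded b_def]
  have n: "n > 0" using v0 v by (metis carrier_vecD gr0I vec_of_dim_0)
  then obtain vs where bv: "b = v # vs" using bc(6,7) by (cases b) auto
  define ws where "ws = gram_schmidt n b"
  note gs = gram_schmidt_result[OF bc(2) bc(4) bc(5) ws_def]
  have lws: "length ws = n" using gs(4) bc(6) by simp
  have ws0: "ws ! 0 = v"
    using gram_schmidt_hd[OF v, of vs] lws n unfolding ws_def bv by (metis hd_conv_nth list.size(3) neq0_conv)
  have wsc: "\<And>i. i < n \<Longrightarrow> ws ! i \<in> carrier_vec n" using gs(3) lws by auto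
  have orth: "\<And>i j. i < n \<Longrightarrow> j < n \<Longrightarrow> (ws ! i \<bullet> ws ! j = 0) = (i \<noteq> j)"
    using gs(2) lws unfolding corthogonal_def by simp
  have pos: "ws ! i \<bullet> ws ! i > 0" if i: "i < n" for i
  proof -
    have "ws ! i \<bullet> ws ! i \<ge> 0" unfolding scalar_prod_def by (auto intro: sum_nonneg)
    thus ?thesis using orth[OF i i] by simp
  qed
  define us where "us = map (\<lambda>w. (1 / sqrt (w \<bullet> w)) \<cdot>\<^sub>v w) ws"
  have lus: "length us = n" unfolding us_def using lws by simp
  have usc: "\<And>i. i < n \<Longrightarrow> us ! i \<in> carrier_vec n" unfolding us_def using wsc lws by simp
  have usp: "us ! i \<bullet> us ! j = (if i = j then 1 else 0)" if i: "i < n" and j: "j < n" for i j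
  proof -
    have "us ! i \<bullet> us ! j = (ws ! i \<bullet> ws ! j) / (sqrt (ws ! i \<bullet> ws ! i) * sqrt (ws ! j \<bullet> ws ! j))"
      unfolding us_def using i j lws wsc[OF i] wsc[OF j] by simp
    thus ?thesis using orth[OF i j] pos[OF i] by (cases "i = j") simp_all
  qed
  define W where "W = mat_of_cols n us"
  have W: "W \<in> carrier_mat n n" unfolding W_def using mat_of_cols_carrier(1)[of n us] lus by simp
  have colW: "\<And>j. j < n \<Longrightarrow> col W j = us ! j" unfolding W_def using lus usc by simp
  have "transpose_mat W * W = 1\<^sub>m n"
    by (rule eq_matI) (use W colW usp in auto)
  moreover have "col W 0 = v" using colW[OF n] v1 ws0 lws n by (simp add: us_def)
  ultimately show ?thesis using W that by blast
qed

lemma congruence_eigenvector_block: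
  fixes A :: "real mat"
  assumes A: "A \<in> carrier_mat (Suc m) (Suc m)" and sym: "transpose_mat A = A"
    and W: "W \<in> carrier_mat (Suc m) (Suc m)" and WW: "transpose_mat W * W = 1\<^sub>m (Suc m)"
    and W0: "A *\<^sub>v col W 0 = e \<cdot>\<^sub>v col W 0"
  obtains A' where "A' \<in> carrier_mat m m" "transpose_mat A' = A'"
    "transpose_mat W * A * W = four_block_mat (mat 1 1 (\<lambda>_. e)) (0\<^sub>m 1 m) (0\<^sub>m m 1) A'"
proof -
  define B where "B = transpose_mat W * A * W"
  have B: "B \<in> carrier_mat (Suc m) (Suc m)" unfolding B_def using W A by simp
  have symB: "transpose_mat B = B" unfolding B_def by (rule symmetric_mat_congruence[OF W A sym])
  have col0: "B $$ (i, 0) = (if i = 0 then e else 0)" if i: "i < Suc m" for i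
  proof -
    have "B $$ (i, 0) = e * (col W i \<bullet> col W 0)"
      unfolding B_def using congruence_entry[OF W A i] W0 W i by simp
    also have "col W i \<bullet> col W 0 = (transpose_mat W * W) $$ (i, 0)" using W i by simp
    finally show ?thesis unfolding WW using i by simp
  qed
  define A' where "A' = mat m m (\<lambda>(i, j). B $$ (Suc i, Suc j))"
  have "A' \<in> carrier_mat m m" unfolding A'_def by simp
  moreover have "transpose_mat A' = A'"
    by (rule eq_matI) (auto simp: A'_def symmetric_mat_entry[OF B symB])
  moreover have "B = four_block_mat (mat 1 1 (\<lambda>_. e)) (0\<^sub>m 1 m) (0\<^sub>m m 1) A'"
  proof (rule eq_matI)
    fix i j assume "i < dim_row (four_block_mat (mat 1 1 (\<lambda>_. e)) (0\<^sub>m 1 m) (0\<^sub>m m 1) A')"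
      "j < dim_col (four_block_mat (mat 1 1 (\<lambda>_. e)) (0\<^sub>m 1 m) (0\<^sub>m m 1) A')"
    hence ij: "i < Suc m" "j < Suc m" by (auto simp: A'_def)
    show "B $$ (i, j) = four_block_mat (mat 1 1 (\<lambda>_. e)) (0\<^sub>m 1 m) (0\<^sub>m m 1) A' $$ (i, j)"
      using ij col0 symmetric_mat_entry[OF B symB, of 0 j] by (cases i; cases j) (auto simp: A'_def)
  qed (use B in \<open>auto simp: A'_def\<close>)
  ultimately show ?thesis using that unfolding B_def by blast
qed

locale orthogonal_diagonalization =
  fixes n :: nat and A U :: "real mat" and es :: "real list"
  assumes U_carrier: "U \<in> carrier_mat n n"
    and U_orthogonal: "transpose_mat U * U = 1\<^sub>m n"
    and length_es: "length es = n"
    and A_eq: "A = U * mat_diag n ((!) es) * transpose_mat U"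

lemma orthogonal_diagonalization_Cons:
  fixes A :: "real mat"
  assumes A: "A \<in> carrier_mat (Suc m) (Suc m)"
    and W: "W \<in> carrier_mat (Suc m) (Suc m)" and WW: "transpose_mat W * W = 1\<^sub>m (Suc m)"
    and block: "transpose_mat W * A * W = four_block_mat (mat 1 1 (\<lambda>_. e)) (0\<^sub>m 1 m) (0\<^sub>m m 1) A'"
    and diag: "orthogonal_diagonalization m A' U' es"
  shows "\<exists>U. orthogonal_diagonalization (Suc m) A U (e # es)"
proof -
  interpret diag: orthogonal_diagonalization m A' U' es by (fact diag)
  note U' = diag.U_carrier
  define D' where "D' = mat_diag m ((!) es)"
  have D': "D' \<in> carrier_mat m m" unfolding D'_def by simp
  define F where "F = four_block_mat (1\<^sub>m 1) (0\<^sub>m 1 m) (0\<^sub>m m 1) U'"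
  have F: "F \<in> carrier_mat (Suc m) (Suc m)" unfolding F_def using U' by auto
  have FT: "transpose_mat F = four_block_mat (1\<^sub>m 1) (0\<^sub>m 1 m) (0\<^sub>m m 1) (transpose_mat U')"
    unfolding F_def using U' by (subst transpose_four_block_mat) auto
  have FF: "transpose_mat F * F = 1\<^sub>m (Suc m)"
    unfolding FT unfolding F_def using U' diag.U_orthogonal
    by (subst mult_four_block_mat[of _ 1 1 _ m _ m _ _ 1 _ m]) auto
  define D where "D = mat_diag (Suc m) ((!) (e # es))"
  have Dc: "D \<in> carrier_mat (Suc m) (Suc m)" unfolding D_def by simp
  have D: "D =
      four_block_mat (mat 1 1 (\<lambda>_. e)) (0\<^sub>m 1 m) (0\<^sub>m m 1) D'"
    unfolding D_def D'_def by (rule eq_matI) (auto simp: mat_diag_def nth_Cons')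
  have block': "transpose_mat W * A * W = F * D * transpose_mat F"
    unfolding block D FT unfolding F_def diag.A_eq D'_def[symmetric] using U' D'
    by (subst mult_four_block_mat[of _ 1 1 _ m _ m _ _ 1 _ m], auto,
        subst mult_four_block_mat[of _ 1 1 _ m _ m _ _ 1 _ m], auto)
  define U where "U = W * F"
  have U: "U \<in> carrier_mat (Suc m) (Suc m)" unfolding U_def using W F by simp
  have UT: "transpose_mat U = transpose_mat F * transpose_mat W"
    unfolding U_def using W F by (simp add: transpose_mult)
  have "transpose_mat U * U = transpose_mat F * (transpose_mat W * W) * F"
    unfolding UT unfolding U_def using W F by (simp add: assoc_mult_mat[of _ "Suc m" "Suc m" _ "Suc m" _ "Suc m"])
  hence UU: "transpose_mat U * U = 1\<^sub>m (Suc m)" unfolding WW using F FF by simp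
  have WW': "W * transpose_mat W = 1\<^sub>m (Suc m)" by (rule orthogonal_mat_right_inverse[OF W WW])
  have "A = (W * transpose_mat W) * A * (W * transpose_mat W)" unfolding WW' using A by simp
  also have "\<dots> = W * (transpose_mat W * A * W) * transpose_mat W"
    using A W by (simp add: assoc_mult_mat[of _ "Suc m" "Suc m" _ "Suc m" _ "Suc m"])
  also have "\<dots> = U * D * transpose_mat U"
    unfolding block' UT unfolding U_def using W F Dc
    by (simp add: assoc_mult_mat[of _ "Suc m" "Suc m" _ "Suc m" _ "Suc m"])
  finally show ?thesis
    using U UU diag.length_es by (intro exI[of _ U]) (simp add: orthogonal_diagonalization_def D_def)
qed

theorem symmetric_mat_orthogonal_diagonalization:
  fixes A :: "real mat"
  assumes "A \<in> carrier_mat n n" and "transpose_mat A = A"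
  shows "\<exists>U es. orthogonal_diagonalization n A U es"
  using assms
proof (induction n arbitrary: A)
  case 0
  then show ?case
    by (intro exI[of _ "1\<^sub>m 0"] exI[of _ "[]"]) (auto simp: orthogonal_diagonalization_def intro!: eq_matI)
next
  case (Suc m A)
  obtain e v where v: "v \<in> carrier_vec (Suc m)" "v \<bullet> v = 1" "A *\<^sub>v v = e \<cdot>\<^sub>v v"
    using symmetric_mat_unit_eigenvector[OF Suc.prems] by blast
  obtain W where W: "W \<in> carrier_mat (Suc m) (Suc m)" "transpose_mat W * W = 1\<^sub>m (Suc m)" "col W 0 = v"
    using unit_vec_orthonormal_completion[OF v(1,2)] by blast
  obtain A' where A': "A' \<in> carrier_mat m m" "transpose_mat A' = A'"
    "transpose_mat W * A * W = four_block_mat (mat 1 1 (\<lambda>_. e)) (0\<^sub>m 1 m) (0\<^sub>m m 1) A'"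
    using congruence_eigenvector_block[OF Suc.prems W(1,2)] v(3) W(3) by blast
  obtain U' es where "orthogonal_diagonalization m A' U' es" using Suc.IH[OF A'(1,2)] by blast
  then show ?case using orthogonal_diagonalization_Cons[OF Suc.prems(1) W(1,2) A'(3)] by blast
qed

lemma dim_mat_diag [simp]: "dim_row (mat_diag n f) = n" "dim_col (mat_diag n f) = n"
  by (simp_all add: mat_diag_def)

lemma mat_diag_mult_vec:
  assumes "y \<in> carrier_vec n"
  shows "mat_diag n f *\<^sub>v y = vec n (\<lambda>j. f j * y $ j)"
proof (rule eq_vecI)
  fix j assume "j < dim_vec (vec n (\<lambda>j. f j * y $ j))"
  hence j: "j < n" by simp
  have "(mat_diag n f *\<^sub>v y) $ j = (\<Sum>k\<in>{0..<n}. (if k = j then f j else 0) * y $ k)"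
    using assms j by (auto simp: mat_diag_def scalar_prod_def intro!: sum.cong)
  also have "\<dots> = (\<Sum>k\<in>{0..<n}. if k = j then f j * y $ j else 0)" by (intro sum.cong) auto
  also have "\<dots> = f j * y $ j" using j by simp
  finally show "(mat_diag n f *\<^sub>v y) $ j = vec n (\<lambda>j. f j * y $ j) $ j" using j by simp
qed simp

lemma proots_prod_linear_factors: "proots (\<Prod>a\<leftarrow>es. [:- a, 1:]) = mset (es :: real list)"
proof (induction es)
  case (Cons a es)
  have "(\<Prod>a\<leftarrow>es. [:- a, 1:]) \<noteq> 0" by auto
  hence "proots ([:- a, 1:] * (\<Prod>a\<leftarrow>es. [:- a, 1:])) = {#a#} + mset es"
    using Cons proots_linear_factor[of "- a"] by (subst proots_mult) auto
  thus ?case by (simp only: list.map prod_list.Cons) simp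
qed simp

context orthogonal_diagonalization
begin

lemma U_orthogonal': "U * transpose_mat U = 1\<^sub>m n"
  by (rule orthogonal_mat_right_inverse[OF U_carrier U_orthogonal])

lemma A_carrier: "A \<in> carrier_mat n n"
  unfolding A_eq carrier_mat_def using U_carrier by auto

lemma sorted_eigenvalues_eq: "sorted_eigenvalues A = sort es"
proof -
  have "similar_mat A (mat_diag n ((!) es))"
    by (rule similar_matI[of _ _ U "transpose_mat U" n])
      (use U_carrier U_orthogonal U_orthogonal' A_carrier A_eq in auto)
  hence "char_poly A = char_poly (mat_diag n ((!) es))" by (rule char_poly_similar)
  also have "\<dots> = (\<Prod>a\<leftarrow>diag_mat (mat_diag n ((!) es)). [:- a, 1:])"
    by (rule char_poly_upper_triangular[OF mat_diag_dim]) (auto simp: upper_triangular_def mat_diag_def)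
  also have "diag_mat (mat_diag n ((!) es)) = es"
    unfolding diag_mat_def mat_diag_def using length_es by (intro nth_equalityI) auto
  finally show ?thesis unfolding sorted_eigenvalues_def by (simp add: proots_prod_linear_factors)
qed

lemma eigval_eq: "eigval A k = sort es ! (k - 1)"
  unfolding eigval_def sorted_eigenvalues_eq ..

lemma col_carrier: "j < n \<Longrightarrow> col U j \<in> carrier_vec n"
  using U_carrier by simp

lemma col_inner: "i < n \<Longrightarrow> j < n \<Longrightarrow> col U i \<bullet> col U j = (if i = j then 1 else 0)"
  using arg_cong[OF U_orthogonal, of "\<lambda>M. M $$ (i, j)"] U_carrier by simp

lemma quadratic_form_eq:
  assumes x: "x \<in> carrier_vec n"
  shows "x \<bullet> (A *\<^sub>v x) = (\<Sum>j<n. es ! j * (col U j \<bullet> x)\<^sup>2)"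
proof -
  define y where "y = transpose_mat U *\<^sub>v x"
  have y: "y \<in> carrier_vec n" unfolding y_def using U_carrier x by simp
  have "A *\<^sub>v x = U *\<^sub>v (mat_diag n ((!) es) *\<^sub>v y)"
    unfolding A_eq y_def using U_carrier x by (simp add: assoc_mult_mat_vec[of _ n n _ n])
  hence "x \<bullet> (A *\<^sub>v x) = y \<bullet> (mat_diag n ((!) es) *\<^sub>v y)"
    using transpose_vec_mult_scalar[OF U_carrier mult_mat_vec_carrier[OF mat_diag_dim y] x]
    unfolding y_def by simp
  also have "\<dots> = (\<Sum>j<n. es ! j * (y $ j)\<^sup>2)"
    using y by (simp add: mat_diag_mult_vec scalar_prod_def lessThan_atLeast0 power2_eq_square mult_ac)
  finally show ?thesis unfolding y_def using U_carrier x by simp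
qed

lemma inner_self_eq:
  assumes x: "x \<in> carrier_vec n"
  shows "x \<bullet> x = (\<Sum>j<n. (col U j \<bullet> x)\<^sup>2)"
proof -
  define y where "y = transpose_mat U *\<^sub>v x"
  have "x = U *\<^sub>v y"
    unfolding y_def using U_carrier x U_orthogonal'
    by (metis assoc_mult_mat_vec one_mult_mat_vec transpose_carrier_mat)
  hence "x \<bullet> x = y \<bullet> y"
    unfolding y_def using U_carrier x by (metis transpose_vec_mult_scalar mult_mat_vec_carrier transpose_carrier_mat)
  also have "\<dots> = (\<Sum>j<n. (y $ j)\<^sup>2)"
    unfolding y_def using U_carrier by (simp add: scalar_prod_def lessThan_atLeast0 power2_eq_square)
  finally show ?thesis unfolding y_def using U_carrier x by simp
qed

lemma col_eigenvector:
  assumes j: "j < n"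
  shows "A *\<^sub>v col U j = es ! j \<cdot>\<^sub>v col U j"
proof -
  have "transpose_mat U *\<^sub>v col U j = unit_vec n j"
    using col_inner[OF _ j] col_carrier[OF j] U_carrier by (intro eq_vecI) (auto simp: unit_vec_def)
  hence "A *\<^sub>v col U j = U *\<^sub>v (mat_diag n ((!) es) *\<^sub>v unit_vec n j)"
    unfolding A_eq using U_carrier j mat_diag_dim by (simp add: assoc_mult_mat_vec[of _ n n _ n])
  also have "mat_diag n ((!) es) *\<^sub>v unit_vec n j = es ! j \<cdot>\<^sub>v unit_vec n j"
    by (rule eq_vecI) (auto simp: mat_diag_mult_vec unit_vec_def)
  also have "U *\<^sub>v unit_vec n j = col U j" using U_carrier j by (intro eq_vecI) auto
  hence "U *\<^sub>v (es ! j \<cdot>\<^sub>v unit_vec n j) = es ! j \<cdot>\<^sub>v col U j"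
    using U_carrier by (simp add: mult_mat_vec)
  finally show ?thesis .
qed

lemma quadratic_form_le:
  assumes x: "x \<in> carrier_vec n" and le: "\<And>j. j < n \<Longrightarrow> col U j \<bullet> x \<noteq> 0 \<Longrightarrow> es ! j \<le> c"
  shows "x \<bullet> (A *\<^sub>v x) \<le> c * (x \<bullet> x)"
  unfolding quadratic_form_eq[OF x] inner_self_eq[OF x] sum_distrib_left
proof (rule sum_mono)
  fix j assume "j \<in> {..<n}"
  then show "es ! j * (col U j \<bullet> x)\<^sup>2 \<le> c * (col U j \<bullet> x)\<^sup>2"
    using le by (cases "col U j \<bullet> x = 0") (auto intro: mult_right_mono)
qed

lemma quadratic_form_ge:
  assumes x: "x \<in> carrier_vec n" and ge: "\<And>j. j < n \<Longrightarrow> col U j \<bullet> x \<noteq> 0 \<Longrightarrow> c \<le> es ! j"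
  shows "c * (x \<bullet> x) \<le> x \<bullet> (A *\<^sub>v x)"
  unfolding quadratic_form_eq[OF x] inner_self_eq[OF x] sum_distrib_left
proof (rule sum_mono)
  fix j assume "j \<in> {..<n}"
  then show "c * (col U j \<bullet> x)\<^sup>2 \<le> es ! j * (col U j \<bullet> x)\<^sup>2"
    using ge by (cases "col U j \<bullet> x = 0") (auto intro: mult_right_mono)
qed

lemma col_quadratic_form: "j < n \<Longrightarrow> col U j \<bullet> (A *\<^sub>v col U j) = es ! j"
  using col_eigenvector col_carrier col_inner[of j j] by simp

end

section \<open>Eigenvalue comparison in the Loewner order\<close>

lemma sort_nth_permutes:
  fixes xs :: "'a :: linorder list"
  obtains p where "p permutes {..<length xs}" "\<And>k. k < length xs \<Longrightarrow> sort xs ! k = xs ! p k"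
proof -
  obtain p where p: "p permutes {..<length xs}" "permute_list p xs = sort xs"
    using mset_eq_permutation[of "sort xs" xs] by auto
  then show ?thesis using permute_list_nth[OF p(1)] that by metis
qed

lemma nth_le_sort_last:
  fixes xs :: "'a :: linorder list"
  assumes "j < length xs"
  shows "xs ! j \<le> sort xs ! (length xs - 1)"
proof -
  have "xs ! j \<in> set (sort xs)" using nth_mem[OF assms] by simp
  then obtain k where k: "k < length (sort xs)" "sort xs ! k = xs ! j"
    unfolding in_set_conv_nth by blast
  have "sort xs ! k \<le> sort xs ! (length xs - 1)" by (rule sorted_nth_mono) (use k in simp_all)
  then show ?thesis using k by simp
qed

lemma sort_last_eq_nth:
  fixes xs :: "'a :: linorder list"
  assumes "xs \<noteq> []"
  obtains j where "j < length xs" "xs ! j = sort xs ! (length xs - 1)"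
proof -
  have "sort xs ! (length xs - 1) \<in> set (sort xs)" using assms by (intro nth_mem) simp
  then show ?thesis using that by (auto simp: in_set_conv_nth)
qed

lemma sort_second_le_nth_except:
  fixes xs :: "'a :: linorder list"
  assumes "xs \<noteq> []"
  obtains i where "i < length xs" "\<And>j. j < length xs \<Longrightarrow> j \<noteq> i \<Longrightarrow> sort xs ! 1 \<le> xs ! j"
proof -
  obtain p where p: "p permutes {..<length xs}" "\<And>k. k < length xs \<Longrightarrow> sort xs ! k = xs ! p k"
    using sort_nth_permutes[of xs] by blast
  have "sort xs ! 1 \<le> xs ! j" if j: "j < length xs" "j \<noteq> p 0" for j
  proof -
    have "j \<in> p ` {..<length xs}" using j(1) permutes_image[OF p(1)] by simp
    then obtain k where k: "k < length xs" "j = p k" by auto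
    with j(2) have "1 \<le> k" by (cases k) auto
    then have "sort xs ! 1 \<le> sort xs ! k" by (intro sorted_nth_mono) (use k in auto)
    then show ?thesis using p(2)[OF k(1)] k by simp
  qed
  moreover have "p 0 < length xs" using permutes_in_image[OF p(1), of 0] assms by simp
  ultimately show ?thesis using that by blast
qed

lemma two_nth_le_sort_second:
  fixes xs :: "'a :: linorder list"
  assumes "2 \<le> length xs"
  obtains p q where "p < length xs" "q < length xs" "p \<noteq> q"
    "xs ! p \<le> sort xs ! 1" "xs ! q \<le> sort xs ! 1"
proof -
  obtain \<pi> where \<pi>: "\<pi> permutes {..<length xs}" "\<And>k. k < length xs \<Longrightarrow> sort xs ! k = xs ! \<pi> k"
    using sort_nth_permutes[of xs] by blast
  have "\<pi> 0 < length xs" "\<pi> 1 < length xs"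
    using permutes_in_image[OF \<pi>(1), of 0] permutes_in_image[OF \<pi>(1), of 1] assms by auto
  moreover have "\<pi> 0 \<noteq> \<pi> 1" using permutes_inj[OF \<pi>(1)] by (metis injD zero_neq_one)
  moreover have "xs ! \<pi> 0 \<le> sort xs ! 1" "xs ! \<pi> 1 \<le> sort xs ! 1"
  proof -
    have "sort xs ! 0 \<le> sort xs ! 1" by (rule sorted_nth_mono) (use assms in simp_all)
    then show "xs ! \<pi> 0 \<le> sort xs ! 1" "xs ! \<pi> 1 \<le> sort xs ! 1"
      using \<pi>(2)[of 0] \<pi>(2)[of 1] assms by force+
  qed
  ultimately show ?thesis using that by blast
qed

lemma nonzero_combination_orthogonal:
  fixes v u w :: "real vec"
  assumes "v \<in> carrier_vec n" "u \<in> carrier_vec n" "w \<in> carrier_vec n"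
  obtains a b where "a \<noteq> 0 \<or> b \<noteq> 0" "v \<bullet> (a \<cdot>\<^sub>v u + b \<cdot>\<^sub>v w) = 0"
proof (cases "v \<bullet> u = 0 \<and> v \<bullet> w = 0")
  case True
  then show ?thesis using that[of 1 0] assms by (simp add: scalar_prod_add_distrib[of _ n])
next
  case False
  then show ?thesis using that[of "v \<bullet> w" "- (v \<bullet> u)"] assms
    by (auto simp: scalar_prod_add_distrib[of _ n])
qed

lemma eigval_largest_mono:
  fixes A B :: "real mat"
  assumes A: "A \<in> carrier_mat n n" "transpose_mat A = A"
    and B: "B \<in> carrier_mat n n" "transpose_mat B = B" and n: "0 < n"
    and le: "\<And>x. x \<in> carrier_vec n \<Longrightarrow> x \<bullet> (A *\<^sub>v x) \<le> x \<bullet> (B *\<^sub>v x)"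
  shows "eigval A n \<le> eigval B n"
proof -
  obtain UA esA where "orthogonal_diagonalization n A UA esA"
    using symmetric_mat_orthogonal_diagonalization[OF A] by blast
  then interpret A: orthogonal_diagonalization n A UA esA .
  obtain UB esB where "orthogonal_diagonalization n B UB esB"
    using symmetric_mat_orthogonal_diagonalization[OF B] by blast
  then interpret B: orthogonal_diagonalization n B UB esB .
  have "esA \<noteq> []" using n A.length_es by auto
  then obtain j where j: "j < n" "esA ! j = eigval A n"
    unfolding A.eigval_eq by (rule sort_last_eq_nth[of esA, unfolded A.length_es])
  define x where "x = col UA j"
  have x: "x \<in> carrier_vec n" and xx: "x \<bullet> x = 1"
    unfolding x_def using A.col_carrier A.col_inner[of j j] j by auto
  have "eigval A n = x \<bullet> (A *\<^sub>v x)" unfolding x_def using A.col_quadratic_form j by simp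
  also have "\<dots> \<le> x \<bullet> (B *\<^sub>v x)" by (rule le[OF x])
  also have "\<dots> \<le> eigval B n * (x \<bullet> x)"
    by (rule B.quadratic_form_le[OF x]) (use nth_le_sort_last B.length_es B.eigval_eq in auto)
  finally show ?thesis using xx by simp
qed

lemma eigval_second_mono:
  fixes A B :: "real mat"
  assumes A: "A \<in> carrier_mat n n" "transpose_mat A = A"
    and B: "B \<in> carrier_mat n n" "transpose_mat B = B" and n: "2 \<le> n"
    and le: "\<And>x. x \<in> carrier_vec n \<Longrightarrow> x \<bullet> (A *\<^sub>v x) \<le> x \<bullet> (B *\<^sub>v x)"
  shows "eigval A 2 \<le> eigval B 2"
proof -
  obtain UA esA where "orthogonal_diagonalization n A UA esA"
    using symmetric_mat_orthogonal_diagonalization[OF A] by blast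
  then interpret A: orthogonal_diagonalization n A UA esA .
  obtain UB esB where "orthogonal_diagonalization n B UB esB"
    using symmetric_mat_orthogonal_diagonalization[OF B] by blast
  then interpret B: orthogonal_diagonalization n B UB esB .
  have "esA \<noteq> []" "2 \<le> length esB" using n A.length_es B.length_es by auto
  obtain i where i: "i < n" "\<And>j. j < n \<Longrightarrow> j \<noteq> i \<Longrightarrow> sort esA ! 1 \<le> esA ! j"
    using sort_second_le_nth_except[OF \<open>esA \<noteq> []\<close>, unfolded A.length_es] by blast
  obtain p q where pq: "p < n" "q < n" "p \<noteq> q" "esB ! p \<le> sort esB ! 1" "esB ! q \<le> sort esB ! 1"
    using two_nth_le_sort_second[OF \<open>2 \<le> length esB\<close>, unfolded B.length_es] by blast
  obtain a b where ab: "a \<noteq> 0 \<or> b \<noteq> 0" and orth: "col UA i \<bullet> (a \<cdot>\<^sub>v col UB p + b \<cdot>\<^sub>v col UB q) = 0"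
    by (rule nonzero_combination_orthogonal[OF A.col_carrier[OF i(1)] B.col_carrier[OF pq(1)] B.col_carrier[OF pq(2)]])
  define x where "x = a \<cdot>\<^sub>v col UB p + b \<cdot>\<^sub>v col UB q"
  have x: "x \<in> carrier_vec n" unfolding x_def using B.col_carrier pq by simp
  have coord: "col UB j \<bullet> x = (if j = p then a else 0) + (if j = q then b else 0)" if "j < n" for j
    unfolding x_def using that pq B.col_carrier B.col_inner
    by (simp add: scalar_prod_add_distrib[of _ n])
  have "x \<bullet> x = (a \<cdot>\<^sub>v col UB p + b \<cdot>\<^sub>v col UB q) \<bullet> x" by (simp add: x_def)
  also have "\<dots> = a * (col UB p \<bullet> x) + b * (col UB q \<bullet> x)"
    using B.col_carrier[OF pq(1)] B.col_carrier[OF pq(2)] x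
    by (simp add: add_scalar_prod_distrib[of _ n] smult_scalar_prod_distrib[of _ n])
  finally have "x \<bullet> x = a\<^sup>2 + b\<^sup>2" using coord pq by (simp add: power2_eq_square)
  hence "0 < x \<bullet> x" using ab by (simp add: sum_power2_gt_zero_iff)
  have "sort esA ! 1 * (x \<bullet> x) \<le> x \<bullet> (A *\<^sub>v x)"
    by (rule A.quadratic_form_ge[OF x]) (use i orth x_def in auto)
  also have "\<dots> \<le> x \<bullet> (B *\<^sub>v x)" by (rule le[OF x])
  also have "\<dots> \<le> sort esB ! 1 * (x \<bullet> x)"
    by (rule B.quadratic_form_le[OF x]) (use coord pq in \<open>auto split: if_split_asm\<close>)
  finally show ?thesis using \<open>0 < x \<bullet> x\<close> by (simp add: A.eigval_eq B.eigval_eq)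
qed


section \<open>Weighted graph Laplacians\<close>

lemma wlaplacian_carrier: "wlaplacian N w \<in> carrier_mat N N"
  unfolding wlaplacian_def by simp

lemma wlaplacian_symmetric:
  assumes "\<And>i j. w i j = w j i"
  shows "transpose_mat (wlaplacian N w) = wlaplacian N w"
  by (rule eq_matI) (auto simp: wlaplacian_def assms)

lemma wlaplacian_mult_vec:
  assumes x: "x \<in> carrier_vec N" and i: "i < N"
  shows "(wlaplacian N w *\<^sub>v x) $ i = (\<Sum>j<N. w i j * (x $ i - x $ j))"
proof -
  have "(wlaplacian N w *\<^sub>v x) $ i = (\<Sum>j<N. wlaplacian N w $$ (i, j) * x $ j)"
    using x i by (simp add: wlaplacian_def scalar_prod_def lessThan_atLeast0)
  also have "\<dots> = wlaplacian N w $$ (i, i) * x $ i + (\<Sum>j\<in>{..<N} - {i}. wlaplacian N w $$ (i, j) * x $ j)"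
    using i by (subst sum.remove[of _ i]) auto
  also have "\<dots> = (\<Sum>j\<in>{..<N} - {i}. w i j) * x $ i + (\<Sum>j\<in>{..<N} - {i}. - w i j * x $ j)"
    using i by (auto simp: wlaplacian_def intro!: sum.cong)
  also have "\<dots> = (\<Sum>j\<in>{..<N} - {i}. w i j * (x $ i - x $ j))"
    by (simp add: right_diff_distrib sum_subtractf sum_distrib_right sum_negf)
  also have "\<dots> = (\<Sum>j<N. w i j * (x $ i - x $ j))"
    using i by (subst (2) sum.remove[of _ i]) auto
  finally show ?thesis .
qed

lemma wlaplacian_quadratic_form:
  assumes x: "x \<in> carrier_vec N" and sym: "\<And>i j. w i j = w j i"
  shows "2 * (x \<bullet> (wlaplacian N w *\<^sub>v x)) = (\<Sum>i<N. \<Sum>j<N. w i j * (x $ i - x $ j)\<^sup>2)"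
proof -
  define Q where "Q = (\<Sum>i<N. \<Sum>j<N. w i j * (x $ i * (x $ i - x $ j)))"
  have "x \<bullet> (wlaplacian N w *\<^sub>v x) = (\<Sum>i<N. x $ i * (wlaplacian N w *\<^sub>v x) $ i)"
    using wlaplacian_carrier[of N w] by (simp add: scalar_prod_def lessThan_atLeast0)
  also have "\<dots> = Q"
    unfolding Q_def using x by (intro sum.cong refl) (simp add: wlaplacian_mult_vec sum_distrib_left mult_ac)
  finally have form: "x \<bullet> (wlaplacian N w *\<^sub>v x) = Q" .
  have "Q = (\<Sum>j<N. \<Sum>i<N. w i j * (x $ i * (x $ i - x $ j)))" unfolding Q_def by (rule sum.swap)
  also have "\<dots> = (\<Sum>i<N. \<Sum>j<N. w i j * (x $ j * (x $ j - x $ i)))"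
    using sym by (intro sum.cong refl) metis
  finally have "2 * Q = (\<Sum>i<N. \<Sum>j<N. w i j * (x $ i * (x $ i - x $ j)) + w i j * (x $ j * (x $ j - x $ i)))"
    unfolding Q_def by (simp add: sum.distrib)
  also have "\<dots> = (\<Sum>i<N. \<Sum>j<N. w i j * (x $ i - x $ j)\<^sup>2)"
    by (simp add: power2_eq_square algebra_simps)
  finally show ?thesis using form by simp
qed

lemma wlaplacian_quadratic_form_mono:
  assumes x: "x \<in> carrier_vec N" and sym: "\<And>i j. w i j = w j i" and sym': "\<And>i j. w' i j = w' j i"
    and le: "\<And>i j. i < N \<Longrightarrow> j < N \<Longrightarrow> i \<noteq> j \<Longrightarrow> w i j \<le> w' i j"
  shows "x \<bullet> (wlaplacian N w *\<^sub>v x) \<le> x \<bullet> (wlaplacian N w' *\<^sub>v x)"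
proof -
  have "(\<Sum>i<N. \<Sum>j<N. w i j * (x $ i - x $ j)\<^sup>2) \<le> (\<Sum>i<N. \<Sum>j<N. w' i j * (x $ i - x $ j)\<^sup>2)"
    using le by (intro sum_mono) (fastforce intro: mult_right_mono)
  then show ?thesis
    using wlaplacian_quadratic_form[where w = w, OF x sym] wlaplacian_quadratic_form[where w = w', OF x sym']
    by simp
qed

lemma eigval_wlaplacian_mono:
  assumes N: "2 \<le> N" and sym: "\<And>i j. w i j = w j i" and sym': "\<And>i j. w' i j = w' j i"
    and le: "\<And>i j. i < N \<Longrightarrow> j < N \<Longrightarrow> i \<noteq> j \<Longrightarrow> w i j \<le> w' i j"
  shows "eigval (wlaplacian N w) 2 \<le> eigval (wlaplacian N w') 2"
    and "eigval (wlaplacian N w) N \<le> eigval (wlaplacian N w') N"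
proof -
  note carrier = wlaplacian_carrier and
    symmetric = wlaplacian_symmetric[where w = w, OF sym] wlaplacian_symmetric[where w = w', OF sym'] and
    loewner = wlaplacian_quadratic_form_mono[where w = w and w' = w', OF _ sym sym' le]
  show "eigval (wlaplacian N w) 2 \<le> eigval (wlaplacian N w') 2"
    by (rule eigval_second_mono[OF carrier symmetric(1) carrier symmetric(2) N loewner])
  show "eigval (wlaplacian N w) N \<le> eigval (wlaplacian N w') N"
    by (rule eigval_largest_mono[OF carrier symmetric(1) carrier symmetric(2) _ loewner]) (use N in simp)
qed

lemma is_walk_rev:
  assumes E: "simple_graph E N" and w: "is_walk E N xs"
  shows "is_walk E N (rev xs)"
  unfolding is_walk_def
proof (intro conjI allI impI)
  fix k assume k: "k + 1 < length (rev xs)"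
  define l where "l = length xs"
  have "E (xs ! (l - 2 - k)) (xs ! (l - 2 - k + 1))"
    using w k unfolding is_walk_def l_def by simp
  moreover have "l - 2 - k + 1 = l - 1 - k" "l - 2 - k = l - 1 - (k + 1)" using k unfolding l_def by simp_all
  ultimately have "E (xs ! (l - 1 - k)) (xs ! (l - 1 - (k + 1)))"
    using E unfolding simple_graph_def by metis
  thus "E (rev xs ! k) (rev xs ! (k + 1))" using k unfolding l_def by (simp add: rev_nth)
qed (use w in \<open>auto simp: is_walk_def\<close>)

lemma gdist_commute:
  assumes "simple_graph E N"
  shows "gdist E N i j = gdist E N j i"
proof -
  have walk_rev: "\<exists>xs. is_walk E N xs \<and> hd xs = j \<and> last xs = i \<and> length xs = k"
    if "is_walk E N xs" "hd xs = i" "last xs = j" "length xs = k" for xs i j k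
    using that is_walk_rev[OF assms that(1)]
    by (intro exI[of _ "rev xs"]) (auto simp: hd_rev last_rev is_walk_def)
  have "(\<exists>xs. is_walk E N xs \<and> hd xs = i \<and> last xs = j \<and> length xs = k + 1) \<longleftrightarrow>
      (\<exists>xs. is_walk E N xs \<and> hd xs = j \<and> last xs = i \<and> length xs = k + 1)" for k
    using walk_rev[of _ i j] walk_rev[of _ j i] by blast
  then show ?thesis unfolding gdist_def by simp
qed

lemma mellin_weight_commute:
  assumes "simple_graph E N"
  shows "mellin_weight E N s i j = mellin_weight E N s j i"
  unfolding mellin_weight_def using gdist_commute[OF assms, of i j] by simp

lemma laplace_weight_commute:
  assumes "simple_graph E N"
  shows "laplace_weight E N l i j = laplace_weight E N l j i"
proof -
  have "E i j = E j i" using assms unfolding simple_graph_def by blast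
  then show ?thesis unfolding laplace_weight_def using gdist_commute[OF assms, of i j] by simp
qed

lemma mellin_weight_antimono:
  assumes "s' \<le> s"
  shows "mellin_weight E N s i j \<le> mellin_weight E N s' i j"
  unfolding mellin_weight_def using assms by (cases "gdist E N i j") (auto intro: powr_mono)

lemma laplace_weight_antimono:
  assumes "l' \<le> l"
  shows "laplace_weight E N l i j \<le> laplace_weight E N l' i j"
  unfolding laplace_weight_def using assms by (simp add: mult_right_mono)

theorem lemma3:
  fixes E :: "nat \<Rightarrow> nat \<Rightarrow> bool" and N :: nat
  assumes "N \<ge> 2" and "simple_graph E N" and "graph_connected E N"
  shows "(\<forall>s s'. 0 < s' \<and> s' < s \<longrightarrow>
            eigval (wlaplacian N (mellin_weight E N s')) 2 \<ge> eigval (wlaplacian N (mellin_weight E N s)) 2 \<and>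
            eigval (wlaplacian N (mellin_weight E N s')) N \<ge> eigval (wlaplacian N (mellin_weight E N s)) N)
       \<and> (\<forall>l l'. 0 < l' \<and> l' < l \<longrightarrow>
            eigval (wlaplacian N (laplace_weight E N l')) 2 \<ge> eigval (wlaplacian N (laplace_weight E N l)) 2 \<and>
            eigval (wlaplacian N (laplace_weight E N l')) N \<ge> eigval (wlaplacian N (laplace_weight E N l)) N)"
proof (intro conjI allI impI)
  fix s s' :: real assume "0 < s' \<and> s' < s"
  then have "s' \<le> s" by simp
  note mono = eigval_wlaplacian_mono[OF assms(1) mellin_weight_commute[OF assms(2)]
      mellin_weight_commute[OF assms(2)] mellin_weight_antimono[OF this]]
  show "eigval (wlaplacian N (mellin_weight E N s')) 2 \<ge> eigval (wlaplacian N (mellin_weight E N s)) 2"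
    by (rule mono(1))
  show "eigval (wlaplacian N (mellin_weight E N s')) N \<ge> eigval (wlaplacian N (mellin_weight E N s)) N"
    by (rule mono(2))
next
  fix l l' :: real assume "0 < l' \<and> l' < l"
  then have "l' \<le> l" by simp
  note mono = eigval_wlaplacian_mono[OF assms(1) laplace_weight_commute[OF assms(2)]
      laplace_weight_commute[OF assms(2)] laplace_weight_antimono[OF this]]
  show "eigval (wlaplacian N (laplace_weight E N l')) 2 \<ge> eigval (wlaplacian N (laplace_weight E N l)) 2"
    by (rule mono(1))
  show "eigval (wlaplacian N (laplace_weight E N l')) N \<ge> eigval (wlaplacian N (laplace_weight E N l)) N"
    by (rule mono(2))
qed

end
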